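(* For every composition $\alpha$ and all $a,b\in\mathbb C$, $\omega(\widehat{\mathcal B}(a,b)_\alpha)=\widehat{\mathcal B}(-a,a+b)_{\alpha^r}$.
   Context: $\mathsf{NSym}$ is the algebra of noncommutative symmetric functions over $\mathbb C$ with basis $H_\alpha=H_{\alpha_1}\cdots H_{\alpha_l}$; $\Lambda_n=\sum_{\beta}(-1)^{n-\ell(\beta)}H_\beta$ (sum over compositions $\beta$ of $n$) and $\Lambda_\alpha=\Lambda_{\alpha_1}\cdots\Lambda_{\alpha_l}$. $\omega:\mathsf{NSym}\to\mathsf{NSym}$ is the involutive algebra anti-automorphism with $\omega(H_\alpha)=\Lambda_{\alpha^r}$, where $\alpha^r=(\alpha_l,\dots,\alpha_1)$. For a composition $\alpha$ of $n$, $\mathrm{set}(\alpha)=\{\alpha_1,\alpha_1+\alpha_2,\dots,\alpha_1+\dots+\alpha_{l-1}\}$, $\ell(\alpha)=l$, and $\beta\preceq\alpha$ means $\mathrm{set}(\alpha)\subseteq\mathrm{set}(\beta)$. Define $\widehat{\mathcal B}(a,b)_\alpha=\sum_{\beta\preceq\alpha}a^{n-\ell(\beta)}b^{\ell(\beta)-\ell(\alpha)}H_\beta$ (convention $0^0=1$), and $\widehat{\mathcal B}(a,b)$ of the empty composition is $1$. *)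

theory Defs
  imports Complex_Main
begin

text \<open>Elements of NSym are represented by their coefficient functions in the
 basis H_alpha: an element f corresponds to the sum over compositions alpha of
 f alpha * H_alpha.\<close>

type_synonym nsym = "nat list \<Rightarrow> complex"

definition is_composition :: "nat list \<Rightarrow> bool" where
  "is_composition \<alpha> \<longleftrightarrow> (\<forall>x\<in>set \<alpha>. 0 < x)"

definition comps :: "nat \<Rightarrow> nat list set" where
  "comps n = {\<beta>. is_composition \<beta> \<and> sum_list \<beta> = n}"

definition compset :: "nat list \<Rightarrow> nat set" where
  "compset \<alpha> = {sum_list (take i \<alpha>) | i. 0 < i \<and> i < length \<alpha>}"

definition refines :: "nat list \<Rightarrow> nat list \<Rightarrow> bool" where
  "refines \<beta> \<alpha> \<longleftrightarrow> compset \<alpha> \<subseteq> compset \<beta>"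

text \<open>Multiplication: H_u H_v = H_(u@v), extended bilinearly.\<close>
definition nmult :: "nsym \<Rightarrow> nsym \<Rightarrow> nsym" where
  "nmult f g = (\<lambda>\<gamma>. \<Sum>i\<le>length \<gamma>. f (take i \<gamma>) * g (drop i \<gamma>))"

definition none :: nsym where
  "none = (\<lambda>\<gamma>. if \<gamma> = [] then 1 else 0)"

definition Hgen :: "nat \<Rightarrow> nsym" where
  "Hgen n = (\<lambda>\<gamma>. if \<gamma> = [n] then 1 else 0)"

definition H :: "nat list \<Rightarrow> nsym" where
  "H \<alpha> = foldr (\<lambda>n acc. nmult (Hgen n) acc) \<alpha> none"

definition Lam :: "nat \<Rightarrow> nsym" where
  "Lam n = (\<lambda>\<gamma>. \<Sum>\<beta>\<in>comps n. (-1) ^ (n - length \<beta>) * H \<beta> \<gamma>)"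

definition LamC :: "nat list \<Rightarrow> nsym" where
  "LamC \<alpha> = foldr (\<lambda>n acc. nmult (Lam n) acc) \<alpha> none"

text \<open>omega: the linear map with omega(H_alpha) = Lambda_(rev alpha). Since Lambda_(rev alpha)
 is homogeneous of degree |alpha|, the coefficient of H_gamma in omega(f) only involves
 f alpha for compositions alpha of |gamma|.\<close>
definition omega :: "nsym \<Rightarrow> nsym" where
  "omega f = (\<lambda>\<gamma>. \<Sum>\<alpha>\<in>comps (sum_list \<gamma>). f \<alpha> * LamC (rev \<alpha>) \<gamma>)"

text \<open>Bhat(a,b)_alpha; Isabelle's 0^0 = 1 matches the convention.\<close>
definition Bhat :: "complex \<Rightarrow> complex \<Rightarrow> nat list \<Rightarrow> nsym" where
  "Bhat a b \<alpha> = (\<lambda>\<gamma>. \<Sum>\<beta>\<in>{\<beta>\<in>comps (sum_list \<alpha>). refines \<beta> \<alpha>}.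
      a ^ (sum_list \<alpha> - length \<beta>) * b ^ (length \<beta> - length \<alpha>) * H \<beta> \<gamma>)"

end

theory Submission
  imports Defs
begin

(*
  In the H basis, Lambda_delta has coefficient (-1)^(n - l(gamma)) at H_gamma if gamma refines
  delta and 0 otherwise. So the coefficient of H_gamma in omega(Bhat(a,b)_alpha) is
  (-1)^(n - l(gamma)) times the sum of a^(n - l(beta)) b^(l(beta) - l(alpha)) over the interval
  gamma^r <= beta <= alpha of the refinement order; reversal only reflects set(beta) in n.
  Under beta |-> set(beta), compositions of n are the subsets of {1, ..., n-1}, so this interval
  is a Boolean lattice and the binomial theorem collapses the sum to
  a^(n - l(gamma)) (a + b)^(l(gamma) - l(alpha)).
*)

section \<open>Compositions and their descent sets\<close>

lemma is_composition_Nil [simp]: "is_composition []"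
  and is_composition_Cons [simp]: "is_composition (x # w) \<longleftrightarrow> 0 < x \<and> is_composition w"
  and is_composition_append [simp]: "is_composition (u @ v) \<longleftrightarrow> is_composition u \<and> is_composition v"
  and is_composition_rev [simp]: "is_composition (rev u) \<longleftrightarrow> is_composition u"
  by (auto simp: is_composition_def)

lemma sum_list_composition_pos: "is_composition \<beta> \<Longrightarrow> \<beta> \<noteq> [] \<Longrightarrow> 0 < sum_list \<beta>"
  by (cases \<beta>) auto

lemma comps_0: "comps 0 = {[]}"
proof -
  have "\<beta> = []" if "is_composition \<beta>" "sum_list \<beta> = 0" for \<beta>
    using sum_list_composition_pos[OF that(1)] that(2) by (cases "\<beta> = []") simp_all
  then show ?thesis
    by (auto simp: comps_def simp del: sum_list_eq_0_iff)
qed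

lemma length_le_sum_list: "is_composition \<beta> \<Longrightarrow> length \<beta> \<le> sum_list \<beta>"
  by (induction \<beta>) auto

lemma compset_Nil [simp]: "compset [] = {}"
  and compset_singleton [simp]: "compset [x] = {}"
  by (simp_all add: compset_def)

lemma compset_Cons:
  assumes "w \<noteq> []"
  shows "compset (x # w) = insert x ((+) x ` compset w)"
proof
  show "compset (x # w) \<subseteq> insert x ((+) x ` compset w)"
  proof
    fix y assume "y \<in> compset (x # w)"
    then obtain j where j: "j < length w" "y = sum_list (take (Suc j) (x # w))"
      unfolding compset_def by (auto simp: gr0_conv_Suc)
    then show "y \<in> insert x ((+) x ` compset w)"
      by (cases "j = 0") (auto simp: compset_def)
  qed
  show "insert x ((+) x ` compset w) \<subseteq> compset (x # w)"
  proof -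
    have "x = sum_list (take 1 (x # w))" by simp
    then have "x \<in> compset (x # w)"
      unfolding compset_def using assms by fastforce
    moreover have "x + sum_list (take j w) \<in> compset (x # w)" if "0 < j" "j < length w" for j
    proof -
      have "x + sum_list (take j w) = sum_list (take (Suc j) (x # w))" by simp
      then show ?thesis unfolding compset_def using that by fastforce
    qed
    ultimately show ?thesis by (auto simp: compset_def)
  qed
qed

lemma finite_compset [simp]: "finite (compset \<beta>)"
  by (simp add: compset_def)

lemma compset_subset_atMost: "compset \<beta> \<subseteq> {..sum_list \<beta>}"
proof -
  have "sum_list (take i \<beta>) \<le> sum_list \<beta>" for i
    using sum_list_append[of "take i \<beta>" "drop i \<beta>"] by simp
  then show ?thesis
    by (auto simp: compset_def)
qed

lemma compset_subset_interval:
  "is_composition \<beta> \<Longrightarrow> compset \<beta> \<subseteq> {0<..<sum_list \<beta>}"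
proof (induction \<beta>)
  case (Cons x w)
  show ?case
  proof (cases "w = []")
    case False
    then have "0 < sum_list w"
      using Cons.prems by (intro sum_list_composition_pos) simp_all
    then show ?thesis
      using Cons False by (auto simp: compset_Cons)
  qed simp
qed simp

lemma card_compset: "is_composition \<beta> \<Longrightarrow> card (compset \<beta>) = length \<beta> - 1"
proof (induction \<beta>)
  case (Cons x w)
  show ?case
  proof (cases "w = []")
    case False
    have "x \<notin> (+) x ` compset w"
      using compset_subset_interval[of w] Cons.prems by auto
    then show ?thesis
      using Cons False by (simp add: compset_Cons card_image)
  qed simp
qed simp

lemma compset_append:
  "u \<noteq> [] \<Longrightarrow> v \<noteq> [] \<Longrightarrow>
     compset (u @ v) = compset u \<union> insert (sum_list u) ((+) (sum_list u) ` compset v)"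
proof (induction u)
  case (Cons x w)
  then show ?case
    by (cases "w = []") (auto simp: compset_Cons image_image add.assoc)
qed simp

lemma compset_rev: "compset (rev \<beta>) = (\<lambda>y. sum_list \<beta> - y) ` compset \<beta>"
proof (induction \<beta>)
  case (Cons x w)
  show ?case
  proof (cases "w = []")
    case False
    then have "compset (rev w @ [x]) = compset (rev w) \<union> {sum_list w}"
      by (subst compset_append) auto
    then show ?thesis
      using Cons False by (auto simp: compset_Cons image_image)
  qed simp
qed simp

lemma compset_Cons_shift:
  assumes "is_composition w" "w \<noteq> []"
  shows "x = Min (compset (x # w))" and "compset w = (\<lambda>z. z - x) ` (compset (x # w) - {x})"
proof -
  have pos: "\<forall>z\<in>compset w. 0 < z"
    using compset_subset_interval[OF assms(1)] by auto
  then show "x = Min (compset (x # w))"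
    using assms(2) by (auto simp: compset_Cons intro: Min_eqI[symmetric])
  have "compset (x # w) - {x} = (+) x ` compset w"
    using pos assms(2) by (auto simp: compset_Cons)
  then show "compset w = (\<lambda>z. z - x) ` (compset (x # w) - {x})"
    by (simp add: image_image)
qed

lemma composition_eqI:
  assumes "is_composition \<beta>" "is_composition \<gamma>" "sum_list \<beta> = sum_list \<gamma>"
    and "compset \<beta> = compset \<gamma>"
  shows "\<beta> = \<gamma>"
  using assms
proof (induction \<beta> arbitrary: \<gamma>)
  case Nil
  then have "\<gamma> \<in> comps 0"
    by (simp add: comps_def)
  then show ?case
    by (simp add: comps_0)
next
  case (Cons x w)
  have "\<gamma> \<noteq> []"
    using Cons.prems(1,3) by auto
  then obtain y v where \<gamma>: "\<gamma> = y # v"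
    by (cases \<gamma>) auto
  show ?case
  proof (cases "w = []")
    case True
    then have "v = []"
      using Cons.prems(4) compset_Cons[of v y] by (cases "v = []") (simp_all add: \<gamma>)
    then show ?thesis
      using Cons.prems(3) True \<gamma> by simp
  next
    case False
    then have "v \<noteq> []"
      using Cons.prems(4) compset_Cons[of w x] by (auto simp: \<gamma>)
    then have "x = y" and "compset w = compset v"
      using compset_Cons_shift[of w x] compset_Cons_shift[of v y] Cons.prems False
      by (simp_all add: \<gamma>)
    then show ?thesis
      using Cons.IH[of v] Cons.prems by (simp add: \<gamma>)
  qed
qed

lemma ex_composition_compset:
  "S \<subseteq> {0<..<n} \<Longrightarrow> \<exists>\<beta>\<in>comps n. compset \<beta> = S"
proof (induction n arbitrary: S rule: less_induct)
  case (less n)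
  consider (zero) "n = 0" | (no_descents) "0 < n" "S = {}" | (descents) "S \<noteq> {}"
    by blast
  then show ?case
  proof cases
    case zero
    then show ?thesis
      using less.prems by (simp add: comps_0)
  next
    case no_descents
    then show ?thesis
      by (intro bexI[of _ "[n]"]) (simp_all add: comps_def)
  next
    case descents
    define x where "x = Min S"
    have "finite S"
      using less.prems finite_subset by blast
    then have x: "x \<in> S" "\<And>y. y \<in> S \<Longrightarrow> x \<le> y"
      using descents by (simp_all add: x_def)
    then have "0 < x" "x < n"
      using less.prems by auto
    define S' where "S' = (\<lambda>y. y - x) ` (S - {x})"
    have "S' \<subseteq> {0<..<n - x}"
      using less.prems x by (force simp: S'_def)
    moreover have "n - x < n"
      using \<open>0 < x\<close> \<open>x < n\<close> by simp
    ultimately obtain \<beta> where \<beta>: "\<beta> \<in> comps (n - x)" "compset \<beta> = S'"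
      using less.IH by blast
    have "\<beta> \<noteq> []"
      using \<beta>(1) \<open>x < n\<close> by (auto simp: comps_def)
    moreover have "insert x ((+) x ` S') = S"
      using x by (force simp: S'_def image_image)
    ultimately have "compset (x # \<beta>) = S"
      by (simp add: compset_Cons \<beta>(2))
    moreover have "x # \<beta> \<in> comps n"
      using \<beta>(1) \<open>0 < x\<close> \<open>x < n\<close> by (simp add: comps_def)
    ultimately show ?thesis
      by blast
  qed
qed

lemma bij_betw_compset: "bij_betw compset (comps n) (Pow {0<..<n})"
proof (rule bij_betw_imageI)
  show "inj_on compset (comps n)"
    by (rule inj_onI) (auto simp: comps_def intro: composition_eqI)
  have "compset ` comps n \<subseteq> Pow {0<..<n}"
    using compset_subset_interval by (auto simp: comps_def)
  moreover have "S \<in> compset ` comps n" if "S \<in> Pow {0<..<n}" for S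
    using ex_composition_compset[of S n] that by auto
  ultimately show "compset ` comps n = Pow {0<..<n}"
    by blast
qed

lemma finite_comps [simp]: "finite (comps n)"
  using bij_betw_finite[OF bij_betw_compset] by simp

lemma length_eq_card_compset:
  "\<beta> \<in> comps n \<Longrightarrow> 0 < n \<Longrightarrow> length \<beta> = card (compset \<beta>) + 1"
  by (cases \<beta>) (auto simp: comps_def card_compset)

section \<open>Refinement\<close>

lemma refines_rev_rev_iff:
  assumes "sum_list \<beta> = sum_list \<gamma>"
  shows "refines (rev \<beta>) (rev \<gamma>) \<longleftrightarrow> refines \<beta> \<gamma>"
proof -
  define f where "f y = sum_list \<beta> - y" for y
  have "inj_on f {..sum_list \<beta>}"
    unfolding f_def by (rule inj_onI) auto
  moreover have "compset \<beta> \<subseteq> {..sum_list \<beta>}" "compset \<gamma> \<subseteq> {..sum_list \<beta>}"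
    using compset_subset_atMost assms by metis+
  ultimately have "f ` compset \<gamma> \<subseteq> f ` compset \<beta> \<longleftrightarrow> compset \<gamma> \<subseteq> compset \<beta>"
    by (metis inj_on_image_eq_iff inj_on_subset le_iff_sup image_Un sup.mono order_refl)
  then show ?thesis
    unfolding refines_def compset_rev assms f_def .
qed

lemma refines_prefix_sum:
  assumes "refines \<gamma> \<alpha>" "sum_list \<gamma> = sum_list \<alpha>" "i \<le> length \<alpha>"
  shows "\<exists>j\<le>length \<gamma>. sum_list (take j \<gamma>) = sum_list (take i \<alpha>)"
proof -
  consider "i = 0" | "i = length \<alpha>" | "0 < i" "i < length \<alpha>"
    using assms(3) by linarith
  then show ?thesis
  proof cases
    case 3
    then have "sum_list (take i \<alpha>) \<in> compset \<gamma>"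
      using assms(1) unfolding refines_def compset_def by blast
    then show ?thesis
      unfolding compset_def by (auto intro: less_imp_le)
  qed (use assms(2) in auto)
qed

lemma refines_append_Cons_iff:
  assumes "is_composition u" "is_composition v" "is_composition (x # w)"
    and "sum_list u = x" "sum_list v = sum_list w"
  shows "refines (u @ v) (x # w) \<longleftrightarrow> refines v w"
proof (cases "w = []")
  case True
  have "v = []"
  proof (rule ccontr)
    assume "v \<noteq> []"
    then have "0 < sum_list v"
      using sum_list_composition_pos[OF assms(2)] by blast
    then show False
      using assms(5) True by simp
  qed
  then show ?thesis
    using True by (simp add: refines_def)
next
  case False
  then have "0 < sum_list w"
    using assms(3) sum_list_composition_pos by simp
  then have "v \<noteq> []" "u \<noteq> []"
    using assms(3-5) by (auto simp del: sum_list_eq_0_iff)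
  then have split: "compset (u @ v) = compset u \<union> insert x ((+) x ` compset v)"
    using assms(4) by (simp add: compset_append)
  have "y < x" if "y \<in> compset u" for y
    using that compset_subset_interval[OF assms(1)] assms(4) by auto
  moreover have "x < y" if "y \<in> (+) x ` compset w" for y
    using that compset_subset_interval[of w] assms(3) by auto
  ultimately have "(+) x ` compset w \<inter> insert x (compset u) = {}"
    by (metis disjoint_iff insert_iff less_irrefl order_less_asym)
  then have "(+) x ` compset w \<subseteq> compset (u @ v) \<longleftrightarrow> (+) x ` compset w \<subseteq> (+) x ` compset v"
    unfolding split by blast
  then show ?thesis
    using False split by (simp add: refines_def compset_Cons inj_image_subset_iff)
qed

section \<open>Coefficients in the H basis\<close>

lemma nmult_delta_left:
  "nmult (\<lambda>\<beta>. if \<beta> = u then 1 else 0) g \<gamma> =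
     (if take (length u) \<gamma> = u then g (drop (length u) \<gamma>) else 0)"
proof -
  have "(if take i \<gamma> = u then 1 else 0) * g (drop i \<gamma>) =
      (if i = length u then (if take (length u) \<gamma> = u then g (drop i \<gamma>) else 0) else 0)"
    if "i \<le> length \<gamma>" for i
  proof -
    have "length (take i \<gamma>) = i"
      using that by simp
    then show ?thesis
      by auto
  qed
  then have "nmult (\<lambda>\<beta>. if \<beta> = u then 1 else 0) g \<gamma> =
      (\<Sum>i\<le>length \<gamma>. if i = length u then (if take (length u) \<gamma> = u then g (drop i \<gamma>) else 0) else 0)"
    unfolding nmult_def by (intro sum.cong) simp_all
  also have "\<dots> = (if take (length u) \<gamma> = u then g (drop (length u) \<gamma>) else 0)"
    by (simp add: sum.delta) (metis length_take min.bounded_iff order_refl)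
  finally show ?thesis .
qed

lemma H_apply: "H \<beta> \<gamma> = (if \<gamma> = \<beta> then 1 else 0)"
proof (induction \<beta> arbitrary: \<gamma>)
  case Nil
  show ?case by (simp add: H_def none_def)
next
  case (Cons x \<beta>)
  have "Hgen x = (\<lambda>\<gamma>. if \<gamma> = [x] then 1 else 0)"
    by (simp add: Hgen_def)
  then have "H (x # \<beta>) \<gamma> = (if take 1 \<gamma> = [x] then H \<beta> (drop 1 \<gamma>) else 0)"
    by (simp add: H_def nmult_delta_left)
  then show ?case
    using Cons.IH by (cases \<gamma>) auto
qed

lemma Lam_apply: "Lam n \<gamma> = (if \<gamma> \<in> comps n then (-1) ^ (n - length \<gamma>) else 0)"
  unfolding Lam_def H_apply by (simp add: if_distrib cong: if_cong)

lemma Bhat_apply: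
  "Bhat a b \<alpha> \<gamma> = (if \<gamma> \<in> comps (sum_list \<alpha>) \<and> refines \<gamma> \<alpha>
     then a ^ (sum_list \<alpha> - length \<gamma>) * b ^ (length \<gamma> - length \<alpha>) else 0)"
  unfolding Bhat_def H_apply by (simp add: if_distrib cong: if_cong)

lemma strict_mono_on_prefix_sums:
  assumes "is_composition \<gamma>"
  shows "strict_mono_on {..length \<gamma>} (\<lambda>i. sum_list (take i \<gamma>))"
proof (rule strict_mono_onI)
  fix i j assume "j \<in> {..length \<gamma>}" "i < j"
  then have "take j \<gamma> = take i \<gamma> @ take (j - i) (drop i \<gamma>)" "take (j - i) (drop i \<gamma>) \<noteq> []"
    using take_add[of i "j - i" \<gamma>] by simp_all
  moreover have "is_composition (take (j - i) (drop i \<gamma>))"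
    using assms unfolding is_composition_def by (meson in_set_dropD in_set_takeD)
  ultimately show "sum_list (take i \<gamma>) < sum_list (take j \<gamma>)"
    using sum_list_composition_pos by simp
qed

lemma nmult_homogeneous_left_split:
  assumes f: "\<And>\<beta>. f \<beta> \<noteq> 0 \<Longrightarrow> \<beta> \<in> comps m"
    and \<gamma>: "is_composition \<gamma>" and i: "i \<le> length \<gamma>" "sum_list (take i \<gamma>) = m"
  shows "nmult f g \<gamma> = f (take i \<gamma>) * g (drop i \<gamma>)"
proof -
  have "f (take j \<gamma>) = 0" if "j \<le> length \<gamma>" "j \<noteq> i" for j
  proof (rule ccontr)
    assume "f (take j \<gamma>) \<noteq> 0"
    then have "sum_list (take j \<gamma>) = sum_list (take i \<gamma>)"
      using f i by (simp add: comps_def)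
    then show False
      using strict_mono_on_imp_inj_on[OF strict_mono_on_prefix_sums[OF \<gamma>]] that i
      by (auto dest: inj_onD)
  qed
  then have "nmult f g \<gamma> = (\<Sum>j\<le>length \<gamma>. if j = i then f (take i \<gamma>) * g (drop i \<gamma>) else 0)"
    unfolding nmult_def by (intro sum.cong) auto
  also have "\<dots> = f (take i \<gamma>) * g (drop i \<gamma>)"
    using i by simp
  finally show ?thesis .
qed

lemma nmult_homogeneous_left_no_split:
  assumes "\<And>\<beta>. f \<beta> \<noteq> 0 \<Longrightarrow> \<beta> \<in> comps m"
    and "\<forall>i\<le>length \<gamma>. sum_list (take i \<gamma>) \<noteq> m"
  shows "nmult f g \<gamma> = 0"
  unfolding nmult_def using assms by (intro sum.neutral) (auto simp: comps_def)

lemma nmult_not_composition: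
  assumes "\<And>\<beta>. f \<beta> \<noteq> 0 \<Longrightarrow> is_composition \<beta>" "\<And>\<beta>. g \<beta> \<noteq> 0 \<Longrightarrow> is_composition \<beta>"
    and "\<not> is_composition \<gamma>"
  shows "nmult f g \<gamma> = 0"
  unfolding nmult_def
proof (intro sum.neutral ballI)
  fix i
  have "\<not> (is_composition (take i \<gamma>) \<and> is_composition (drop i \<gamma>))"
    using assms(3) is_composition_append[of "take i \<gamma>" "drop i \<gamma>"] by simp
  then show "f (take i \<gamma>) * g (drop i \<gamma>) = 0"
    using assms(1,2) by auto
qed

lemma refines_append_Cons_sign:
  assumes u: "u \<in> comps x" and v: "is_composition v" and "is_composition (x # w)"
  shows "(-1) ^ (x - length u) *
      (if v \<in> comps (sum_list w) \<and> refines v w then (-1) ^ (sum_list w - length v) else 0)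
    = (if u @ v \<in> comps (sum_list (x # w)) \<and> refines (u @ v) (x # w)
      then (-1) ^ (sum_list (x # w) - length (u @ v)) else (0::'a::ring_1))"
proof (cases "sum_list v = sum_list w")
  case True
  have "length u \<le> x" "length v \<le> sum_list w"
    using u length_le_sum_list[of u] length_le_sum_list[OF v] True by (auto simp: comps_def)
  then have "x - length u + (sum_list w - length v) = sum_list (x # w) - length (u @ v)"
    by simp
  then show ?thesis
    using True u v assms(3) refines_append_Cons_iff[of u v x w]
    by (simp add: comps_def power_add[symmetric])
qed (use u in \<open>auto simp: comps_def\<close>)

lemma LamC_apply:
  "is_composition \<alpha> \<Longrightarrow>
     LamC \<alpha> \<gamma> = (if \<gamma> \<in> comps (sum_list \<alpha>) \<and> refines \<gamma> \<alpha> then (-1) ^ (sum_list \<alpha> - length \<gamma>) else 0)"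
proof (induction \<alpha> arbitrary: \<gamma>)
  case Nil
  show ?case
    by (simp add: LamC_def none_def comps_0 refines_def)
next
  case (Cons x w)
  have LamC_Cons: "LamC (x # w) = nmult (Lam x) (LamC w)"
    by (simp add: LamC_def)
  have Lam_support: "\<beta> \<in> comps x" if "Lam x \<beta> \<noteq> 0" for \<beta>
    using that by (simp add: Lam_apply split: if_splits)
  have LamC_support: "\<beta> \<in> comps (sum_list w)" if "LamC w \<beta> \<noteq> 0" for \<beta>
    using that Cons by (simp split: if_splits)
  consider (not_composition) "\<not> is_composition \<gamma>"
    | (no_split) "is_composition \<gamma>" "\<forall>i\<le>length \<gamma>. sum_list (take i \<gamma>) \<noteq> x"
    | (split) i where "is_composition \<gamma>" "i \<le> length \<gamma>" "sum_list (take i \<gamma>) = x"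
    by blast
  then show ?case
  proof cases
    case not_composition
    then have "LamC (x # w) \<gamma> = 0"
      unfolding LamC_Cons using Lam_support LamC_support
      by (intro nmult_not_composition) (auto simp: comps_def)
    with not_composition show ?thesis
      by (simp add: comps_def)
  next
    case no_split
    have "LamC (x # w) \<gamma> = 0"
      unfolding LamC_Cons using Lam_support no_split(2) by (rule nmult_homogeneous_left_no_split)
    moreover have "\<not> (sum_list \<gamma> = sum_list (x # w) \<and> refines \<gamma> (x # w))"
      using refines_prefix_sum[of \<gamma> "x # w" 1] no_split by auto
    ultimately show ?thesis
      by (auto simp: comps_def)
  next
    case split
    define u v where "u = take i \<gamma>" and "v = drop i \<gamma>"
    have \<gamma>: "\<gamma> = u @ v"
      by (simp add: u_def v_def)
    with split(1) have "is_composition u" and v: "is_composition v"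
      by simp_all
    then have u: "u \<in> comps x"
      using split(3) by (simp add: u_def comps_def)
    have "LamC (x # w) \<gamma> = Lam x u * LamC w v"
      unfolding LamC_Cons u_def v_def using Lam_support split by (rule nmult_homogeneous_left_split)
    also have "\<dots> = (-1) ^ (x - length u) *
        (if v \<in> comps (sum_list w) \<and> refines v w then (-1) ^ (sum_list w - length v) else 0)"
      using u Cons by (simp add: Lam_apply)
    also have "\<dots> = (if u @ v \<in> comps (sum_list (x # w)) \<and> refines (u @ v) (x # w)
        then (-1) ^ (sum_list (x # w) - length (u @ v)) else 0)"
      by (rule refines_append_Cons_sign[OF u v Cons.prems])
    finally show ?thesis
      by (simp only: \<gamma>)
  qed
qed

section \<open>Sums over intervals of the refinement order\<close>

lemma sum_subset_interval_binomial:
  fixes a b :: "'a::comm_semiring_1"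
  assumes "finite D" "A \<subseteq> D"
  shows "(\<Sum>S | A \<subseteq> S \<and> S \<subseteq> D. a ^ (card D - card S) * b ^ (card S - card A))
           = (a + b) ^ (card D - card A)"
proof -
  have fin: "finite A" "finite (D - A)"
    using assms finite_subset by auto
  have bij: "bij_betw ((\<union>) A) (Pow (D - A)) {S. A \<subseteq> S \<and> S \<subseteq> D}"
    by (rule bij_betw_byWitness[where f' = "\<lambda>S. S - A"]) (use assms in auto)
  have card_union: "card (A \<union> T) = card A + card T" if "T \<subseteq> D - A" for T
    using that fin by (subst card_Un_disjoint) (auto intro: finite_subset)
  have card_rest: "card (D - A - T) = card D - card A - card T" if "T \<subseteq> D - A" for T
    using that fin assms by (simp add: card_Diff_subset finite_subset)
  have "(a + b) ^ (card D - card A) = (\<Prod>x\<in>D - A. b + a)"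
    using assms fin by (simp add: card_Diff_subset add.commute)
  also have "\<dots> = (\<Sum>T\<in>Pow (D - A). b ^ card T * a ^ card (D - A - T))"
    using prod_add[of "D - A" "\<lambda>_. b" "\<lambda>_. a"] fin by simp
  also have "\<dots> = (\<Sum>T\<in>Pow (D - A). a ^ (card D - card (A \<union> T)) * b ^ (card (A \<union> T) - card A))"
    using card_union card_rest by (intro sum.cong) (simp_all add: mult.commute)
  also have "\<dots> = (\<Sum>S | A \<subseteq> S \<and> S \<subseteq> D. a ^ (card D - card S) * b ^ (card S - card A))"
    using bij by (rule sum.reindex_bij_betw)
  finally show ?thesis ..
qed

lemma bij_betw_compset_interval:
  assumes "\<delta> \<in> comps n"
  shows "bij_betw compset {\<beta>. \<beta> \<in> comps n \<and> refines \<beta> \<alpha> \<and> refines \<delta> \<beta>}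
    {S. compset \<alpha> \<subseteq> S \<and> S \<subseteq> compset \<delta>}"
proof (rule bij_betw_subset[OF bij_betw_compset])
  show "compset ` {\<beta>. \<beta> \<in> comps n \<and> refines \<beta> \<alpha> \<and> refines \<delta> \<beta>}
    = {S. compset \<alpha> \<subseteq> S \<and> S \<subseteq> compset \<delta>}"
  proof
    show "{S. compset \<alpha> \<subseteq> S \<and> S \<subseteq> compset \<delta>}
      \<subseteq> compset ` {\<beta>. \<beta> \<in> comps n \<and> refines \<beta> \<alpha> \<and> refines \<delta> \<beta>}"
    proof
      fix S assume S: "S \<in> {S. compset \<alpha> \<subseteq> S \<and> S \<subseteq> compset \<delta>}"
      then have "S \<in> compset ` comps n"
        using assms compset_subset_interval bij_betw_imp_surj_on[OF bij_betw_compset]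
        by (fastforce simp: comps_def)
      with S show "S \<in> compset ` {\<beta>. \<beta> \<in> comps n \<and> refines \<beta> \<alpha> \<and> refines \<delta> \<beta>}"
        by (auto simp: refines_def)
    qed
  qed (auto simp: refines_def)
qed auto

lemma sum_refinement_interval:
  fixes a b :: "'a::comm_semiring_1"
  assumes \<alpha>: "\<alpha> \<in> comps n" and \<delta>: "\<delta> \<in> comps n" and "refines \<delta> \<alpha>"
  shows "(\<Sum>\<beta> | \<beta> \<in> comps n \<and> refines \<beta> \<alpha> \<and> refines \<delta> \<beta>.
            a ^ (n - length \<beta>) * b ^ (length \<beta> - length \<alpha>))
           = a ^ (n - length \<delta>) * (a + b) ^ (length \<delta> - length \<alpha>)"
proof (cases "n = 0")
  case True
  then have "\<alpha> = []" "\<delta> = []" "{\<beta>. \<beta> \<in> comps n \<and> refines \<beta> \<alpha> \<and> refines \<delta> \<beta>} = {[]}"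
    using \<alpha> \<delta> by (auto simp: comps_0 refines_def)
  then show ?thesis
    by simp
next
  case False
  define A D where "A = compset \<alpha>" and "D = compset \<delta>"
  define g where "g S = a ^ (card D - card S) * b ^ (card S - card A)" for S :: "nat set"
  define I where "I = {\<beta>. \<beta> \<in> comps n \<and> refines \<beta> \<alpha> \<and> refines \<delta> \<beta>}"
  have "A \<subseteq> D"
    using assms(3) by (simp add: A_def D_def refines_def)
  have bij: "bij_betw compset I {S. A \<subseteq> S \<and> S \<subseteq> D}"
    using bij_betw_compset_interval[OF \<delta>] by (simp add: I_def A_def D_def)
  have "a ^ (n - length \<beta>) * b ^ (length \<beta> - length \<alpha>) = a ^ (n - length \<delta>) * g (compset \<beta>)"
    if "\<beta> \<in> I" for \<beta>
  proof -
    have "card (compset \<beta>) \<le> card D" "length \<delta> \<le> n"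
      using that \<delta> length_le_sum_list unfolding I_def D_def refines_def comps_def
      by (auto intro: card_mono)
    moreover have "length \<beta> = card (compset \<beta>) + 1" "length \<delta> = card D + 1" "length \<alpha> = card A + 1"
      using that \<alpha> \<delta> False length_eq_card_compset unfolding I_def A_def D_def by auto
    ultimately have "n - length \<beta> = (n - length \<delta>) + (card D - card (compset \<beta>))"
      and "length \<beta> - length \<alpha> = card (compset \<beta>) - card A"
      by simp_all
    then show ?thesis
      by (simp add: g_def power_add mult.assoc)
  qed
  then have "(\<Sum>\<beta>\<in>I. a ^ (n - length \<beta>) * b ^ (length \<beta> - length \<alpha>))
      = a ^ (n - length \<delta>) * (\<Sum>\<beta>\<in>I. g (compset \<beta>))"
    by (simp add: sum_distrib_left)
  also have "\<dots> = a ^ (n - length \<delta>) * (a + b) ^ (card D - card A)"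
    using sum.reindex_bij_betw[OF bij, of g] sum_subset_interval_binomial[OF _ \<open>A \<subseteq> D\<close>, of a b]
    by (simp add: g_def D_def)
  also have "card D - card A = length \<delta> - length \<alpha>"
    using \<alpha> \<delta> False length_eq_card_compset by (simp add: A_def D_def)
  finally show ?thesis
    unfolding I_def .
qed

section \<open>The involution omega\<close>

lemma omega_apply_homogeneous:
  assumes "\<And>\<beta>. f \<beta> \<noteq> 0 \<Longrightarrow> \<beta> \<in> comps n"
  shows "omega f \<gamma> = (if \<gamma> \<in> comps n then \<Sum>\<beta>\<in>comps n. f \<beta> * LamC (rev \<beta>) \<gamma> else 0)"
proof (cases "\<gamma> \<in> comps n")
  case True
  then show ?thesis
    by (simp add: omega_def comps_def)
next
  case False
  have zero_terms: "f \<beta> * LamC (rev \<beta>) \<gamma> = 0" for \<beta>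
  proof (cases "f \<beta> = 0")
    case False
    then have "is_composition \<beta>" "sum_list \<beta> = n"
      using assms by (simp_all add: comps_def)
    then show ?thesis
      using LamC_apply[of "rev \<beta>" \<gamma>] \<open>\<gamma> \<notin> comps n\<close> by simp
  qed simp
  show ?thesis
    using False by (simp add: omega_def zero_terms)
qed

lemma omega_Bhat_apply:
  assumes \<alpha>: "\<alpha> \<in> comps n" and \<gamma>: "\<gamma> \<in> comps n"
  shows "omega (Bhat a b \<alpha>) \<gamma> = (if refines (rev \<gamma>) \<alpha>
    then (-a) ^ (n - length \<gamma>) * (a + b) ^ (length \<gamma> - length \<alpha>) else 0)"
proof -
  define I where "I = {\<beta>. \<beta> \<in> comps n \<and> refines \<beta> \<alpha> \<and> refines (rev \<gamma>) \<beta>}"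
  have n: "sum_list \<alpha> = n"
    using \<alpha> by (simp add: comps_def)
  have "LamC (rev \<beta>) \<gamma> = (if refines (rev \<gamma>) \<beta> then (-1) ^ (n - length \<gamma>) else 0)"
    if "\<beta> \<in> comps n" for \<beta>
    using that \<gamma> LamC_apply[of "rev \<beta>" \<gamma>] refines_rev_rev_iff[of \<gamma> "rev \<beta>"]
    by (simp add: comps_def)
  then have "omega (Bhat a b \<alpha>) \<gamma> = (\<Sum>\<beta>\<in>comps n. (-1) ^ (n - length \<gamma>) *
      (if refines \<beta> \<alpha> \<and> refines (rev \<gamma>) \<beta> then a ^ (n - length \<beta>) * b ^ (length \<beta> - length \<alpha>) else 0))"
    using \<gamma> by (subst omega_apply_homogeneous[of _ n]) (auto simp: Bhat_apply n intro: sum.cong split: if_splits)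
  also have "\<dots> = (-1) ^ (n - length \<gamma>) * (\<Sum>\<beta>\<in>I. a ^ (n - length \<beta>) * b ^ (length \<beta> - length \<alpha>))"
    by (simp add: sum_distrib_left sum.inter_filter I_def)
  also have "\<dots> = (if refines (rev \<gamma>) \<alpha>
      then (-a) ^ (n - length \<gamma>) * (a + b) ^ (length \<gamma> - length \<alpha>) else 0)"
  proof (cases "refines (rev \<gamma>) \<alpha>")
    case True
    moreover have "rev \<gamma> \<in> comps n"
      using \<gamma> by (simp add: comps_def)
    ultimately show ?thesis
      using sum_refinement_interval[OF \<alpha>, of "rev \<gamma>" a b]
      by (simp add: I_def power_minus[of a] mult.assoc)
  next
    case False
    then have "I = {}"
      by (auto simp: I_def refines_def)
    with False show ?thesis
      by simp
  qed
  finally show ?thesis .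
qed

theorem proposition4p12:
  fixes a b :: complex and \<alpha> :: "nat list"
  assumes "is_composition \<alpha>"
  shows "omega (Bhat a b \<alpha>) = Bhat (-a) (a + b) (rev \<alpha>)"
proof
  fix \<gamma>
  define n where "n = sum_list \<alpha>"
  have \<alpha>: "\<alpha> \<in> comps n"
    using assms by (simp add: comps_def n_def)
  have Bhat_support: "Bhat a b \<alpha> \<beta> \<noteq> 0 \<Longrightarrow> \<beta> \<in> comps n" for \<beta>
    by (simp add: Bhat_apply n_def split: if_splits)
  show "omega (Bhat a b \<alpha>) \<gamma> = Bhat (-a) (a + b) (rev \<alpha>) \<gamma>"
  proof (cases "\<gamma> \<in> comps n")
    case True
    then have "refines \<gamma> (rev \<alpha>) \<longleftrightarrow> refines (rev \<gamma>) \<alpha>"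
      using refines_rev_rev_iff[of \<gamma> "rev \<alpha>"] by (simp add: comps_def n_def)
    with True show ?thesis
      by (simp add: omega_Bhat_apply[OF \<alpha> True] Bhat_apply n_def)
  next
    case False
    then show ?thesis
      using omega_apply_homogeneous[of "Bhat a b \<alpha>" n \<gamma>, OF Bhat_support]
      by (simp add: Bhat_apply n_def[symmetric])
  qed
qed

end
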